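(* In the setting below (either $P=\mathfrak S$ or $P=\mathfrak A$, absolute error criterion), if $\{S_d\}$ is polynomially tractable with constants $C,p>0$, $q\ge0$, then $\lambda\in\ell_\tau$ for all $\tau>p/2$, and for every such $\tau$ and all $d\in\mathbb N$, $$\frac1{\lambda_{d,\psi(1)}^\tau}\sum_{k\in\nabla_d}\lambda_{d,k}^\tau\le(1+C)d^q+C^{2\tau/p}\zeta\Big(\frac{2\tau}p\Big)\Big(\frac{d^{2q/p}}{\lambda_{d,\psi(1)}}\Big)^\tau.$$
   Context: Setting: $S_1:H_1\to G_1$ is a compact linear operator between real Hilbert spaces ($H_1$ infinite-dimensional separable); $\lambda=(\lambda_m)_{m\in\mathbb N}$, $\lambda_1\ge\lambda_2\ge\dots\ge0$, are the eigenvalues of $S_1^\dagger S_1$. $S_d=S_1^{\otimes d}:H_1^{\otimes d}\to G_1^{\otimes d}$. For each $d$ fix $\emptyset\ne I_d=\{i_1<\dots<i_{a_d}\}\subset\{1,\dots,d\}$ ($I_1=\{1\}$), put $a_d=\#I_d$, $b_d=d-a_d$, and fix one type $P\in\{\mathfrak S,\mathfrak A\}$ for all $d$; the problem $\{S_d\}$ is the family of restrictions of $S_d$ to the $I_d$-symmetric subspace (if $P=\mathfrak S$) or $I_d$-antisymmetric subspace (if $P=\mathfrak A$) of $H_1^{\otimes d}$, i.e. the range of $\frac1{a_d!}\sum_{\pi}(\pm1)U_\pi$, the sum over permutations $\pi$ of $\{1,\dots,d\}$ fixing all points outside $I_d$, $U_\pi(f_1\otimes\cdots\otimes f_d)=f_{\pi(1)}\otimes\cdots\otimes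 f_{\pi(d)}$, sign $(-1)^{|\pi|}$ used for $\mathfrak A$. Let $\nabla_d=\{k\in\mathbb N^d:k_{i_1}\le\dots\le k_{i_{a_d}}\}$ for $P=\mathfrak S$ and with strict inequalities for $P=\mathfrak A$; $\lambda_{d,k}=\prod_{l=1}^d\lambda_{k_l}$; $\psi:\mathbb N\to\nabla_d$ a bijection with $\lambda_{d,\psi(1)}\ge\lambda_{d,\psi(2)}\ge\cdots$. These are exactly the eigenvalues of $S_d^\dagger S_d$ on the subspace, and the information complexity (absolute error) is $n(\epsilon,d)=\#\{k\in\nabla_d:\lambda_{d,k}>\epsilon^2\}$, the initial error $\epsilon^{\rm init}_d=\sqrt{\lambda_{d,\psi(1)}}$ (equal to $\lambda_1^{d/2}$ if $P=\mathfrak S$, and $\sqrt{\lambda_1^{b_d}\lambda_1\lambda_2\cdots\lambda_{a_d}}$ if $P=\mathfrak A$). Polynomially tractable: $\exists C,p>0,q\ge0$ with $n(\epsilon,d)\le C\epsilon^{-p}d^q$ for all $d\in\mathbb N,\epsilon\in(0,1]$; strongly polynomially tractable: this with $q=0$. Standing assumptions: $\lambda_2>0$ and $\epsilon_d^{\rm init}>0$ for all $d$. $\ell_\tau$: sequences with $\|\lambda\|_{\ell_\tau}^\tau=\sum_m\lambda_m^\tau<\infty$. $\zeta$ is the Riemann zeta function. *)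

theory Defs
  imports "HOL-Analysis.Analysis"
begin

text \<open>Eigenvalue sequences are indexed from 1: lam 1, lam 2, ...; the value lam 0 is unused.
  Multi-indices k in N^d are functions on {1..d} (extensional, undefined outside).
  The flag anti selects P = antisymmetric (True) or P = symmetric (False).\<close>

definition nabla :: "bool \<Rightarrow> (nat \<Rightarrow> nat set) \<Rightarrow> nat \<Rightarrow> (nat \<Rightarrow> nat) set" where
  "nabla anti I d = {k \<in> PiE {1..d} (\<lambda>_. {1..}).
      \<forall>i\<in>I d. \<forall>j\<in>I d. i < j \<longrightarrow> (if anti then k i < k j else k i \<le> k j)}"

definition lam_dk :: "(nat \<Rightarrow> real) \<Rightarrow> nat \<Rightarrow> (nat \<Rightarrow> nat) \<Rightarrow> real" where
  "lam_dk lam d k = (\<Prod>l\<in>{1..d}. lam (k l))"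

definition info_compl :: "(nat \<Rightarrow> real) \<Rightarrow> bool \<Rightarrow> (nat \<Rightarrow> nat set) \<Rightarrow> real \<Rightarrow> nat \<Rightarrow> nat" where
  "info_compl lam anti I \<epsilon> d = card {k \<in> nabla anti I d. lam_dk lam d k > \<epsilon>\<^sup>2}"

definition zeta_real :: "real \<Rightarrow> real" where
  "zeta_real s = (\<Sum>n. 1 / (real (Suc n)) powr s)"

end

theory Submission imports Defs begin

(* Fix a dimension d and write mu_j = lam_dk lam d (psi d j) for the ordered eigenvalues.
   Since mu is nonincreasing, mu_j > e forces the j indices psi d 1, ..., psi d j to be
   counted by n(sqrt e, d), so tractability gives j <= D e^(-p/2) with D = C d^q.
   Letting e run up to mu_j yields the decay mu_j <= (D/j)^(2/p) for every j > D.
   Splitting the series of mu_j^tau into the at most D indices j <= D (each term at most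
   mu_1^tau) and the tail, bounded termwise by D^(2 tau/p) j^(-2 tau/p), gives the estimate
   with zeta(2 tau/p), which converges because tau > p/2.  The series over the ordering is
   the unordered sum over nabla since psi d is a bijection; and for d = 1 (I 1 = {1}) the
   multi-indices are just the single indices, which gives lam in l_tau. *)

text \<open>For a nonincreasing nonnegative sequence tending to 0, only finitely many multi-indices
  have product eigenvalue above a positive level; this makes the information complexity a
  genuine count.\<close>

lemma multi_index_superlevel_finite:
  fixes lam :: "nat \<Rightarrow> real"
  assumes lam_nonneg: "\<And>m. m \<ge> 1 \<Longrightarrow> lam m \<ge> 0"
    and lam_mono: "\<And>m n. 1 \<le> m \<Longrightarrow> m \<le> n \<Longrightarrow> lam n \<le> lam m"
    and lam_to_0: "(\<lambda>m. lam (Suc m)) \<longlonglongrightarrow> 0"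
    and lam1: "lam 1 > 0" and e: "e > 0"
  shows "finite {k \<in> PiE {1..d} (\<lambda>_. {1::nat..}). lam_dk lam d k > e}"
proof -
  define t where "t = e / lam 1 ^ (d - 1)"
  have t: "t > 0" using lam1 e by (simp add: t_def)
  from lam_to_0 t obtain M where M: "\<And>m. m \<ge> M \<Longrightarrow> lam (Suc m) < t"
    by (metis (no_types, lifting) LIMSEQ_D diff_zero norm_minus_cancel real_norm_def abs_less_iff)
  (* Every coordinate of such a multi-index is at most M: otherwise one factor is below t
     while the remaining d - 1 factors are at most lam 1. *)
  have "{k \<in> PiE {1..d} (\<lambda>_. {1::nat..}). lam_dk lam d k > e} \<subseteq> PiE {1..d} (\<lambda>_. {1..M})"
  proof
    fix k assume k: "k \<in> {k \<in> PiE {1..d} (\<lambda>_. {1::nat..}). lam_dk lam d k > e}"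
    have kpos: "\<And>i. i \<in> {1..d} \<Longrightarrow> k i \<ge> 1" using k by (auto simp: PiE_def Pi_def)
    have "k l \<le> M" if l: "l \<in> {1..d}" for l
    proof (rule ccontr)
      assume "\<not> k l \<le> M"
      then have small: "lam (k l) < t" using M[of "k l - 1"] by simp
      have rest: "(\<Prod>i\<in>{1..d}-{l}. lam (k i)) \<le> lam 1 ^ (d - 1)"
      proof -
        have "(\<Prod>i\<in>{1..d}-{l}. lam (k i)) \<le> (\<Prod>i\<in>{1..d}-{l}. lam 1)"
          by (rule prod_mono) (use kpos lam_nonneg lam_mono in auto)
        also have "\<dots> = lam 1 ^ (d - 1)" using l by (simp add: card_Diff_singleton)
        finally show ?thesis .
      qed
      have "lam_dk lam d k = lam (k l) * (\<Prod>i\<in>{1..d}-{l}. lam (k i))"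
        unfolding lam_dk_def using l by (simp add: prod.remove)
      also have "\<dots> \<le> lam (k l) * lam 1 ^ (d - 1)"
        using rest kpos[OF l] lam_nonneg by (simp add: mult_left_mono)
      also have "\<dots> < t * lam 1 ^ (d - 1)" using small lam1 by simp
      also have "\<dots> = e" using lam1 by (simp add: t_def)
      finally show False using k by simp
    qed
    then show "k \<in> PiE {1..d} (\<lambda>_. {1..M})" using k by (auto simp: PiE_def Pi_def)
  qed
  then show ?thesis by (rule finite_subset) (simp add: finite_PiE)
qed

lemma lam_dk_nonneg:
  fixes lam :: "nat \<Rightarrow> real"
  assumes "\<And>m. m \<ge> 1 \<Longrightarrow> lam m \<ge> 0" and "k \<in> nabla anti I d"
  shows "lam_dk lam d k \<ge> 0"
  using assms unfolding lam_dk_def nabla_def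
  by (auto intro!: prod_nonneg simp: PiE_def Pi_def)

text \<open>If the j-th largest eigenvalue exceeds e, the first j indices of the ordering all
  exceed e = (sqrt e)^2, so j is at most the information complexity at sqrt e.\<close>

lemma index_le_info_compl:
  fixes lam :: "nat \<Rightarrow> real" and \<psi> :: "nat \<Rightarrow> nat \<Rightarrow> nat"
  assumes lam_nonneg: "\<And>m. m \<ge> 1 \<Longrightarrow> lam m \<ge> 0"
    and lam_mono: "\<And>m n. 1 \<le> m \<Longrightarrow> m \<le> n \<Longrightarrow> lam n \<le> lam m"
    and lam_to_0: "(\<lambda>m. lam (Suc m)) \<longlonglongrightarrow> 0"
    and lam1: "lam 1 > 0"
    and bij: "bij_betw \<psi> {1..} (nabla anti I d)"
    and ord: "\<And>i j. 1 \<le> i \<Longrightarrow> i \<le> j \<Longrightarrow> lam_dk lam d (\<psi> j) \<le> lam_dk lam d (\<psi> i)"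
    and e: "0 < e" "e < lam_dk lam d (\<psi> j)"
  shows "j \<le> info_compl lam anti I (sqrt e) d"
proof -
  let ?S = "{k \<in> nabla anti I d. lam_dk lam d k > (sqrt e)\<^sup>2}"
  have fin: "finite ?S"
    by (rule finite_subset[OF _ multi_index_superlevel_finite[of lam e d]])
       (use assms in \<open>auto simp: nabla_def\<close>)
  have sub: "\<psi> ` {1..j} \<subseteq> ?S"
  proof
    fix k assume "k \<in> \<psi> ` {1..j}"
    then obtain i where i: "i \<in> {1..j}" "k = \<psi> i" by auto
    have "lam_dk lam d (\<psi> j) \<le> lam_dk lam d (\<psi> i)" using ord[of i j] i by simp
    moreover have "\<psi> i \<in> nabla anti I d" using bij i by (auto simp: bij_betw_def)
    ultimately show "k \<in> ?S" using i e by simp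
  qed
  have "inj_on \<psi> {1..j}" using bij by (auto simp: bij_betw_def intro: inj_on_subset)
  then have "j = card (\<psi> ` {1..j})" by (simp add: card_image)
  also have "\<dots> \<le> card ?S" by (rule card_mono[OF fin sub])
  finally show ?thesis by (simp add: info_compl_def)
qed

lemma decay_from_counting:
  fixes mu :: "nat \<Rightarrow> real" and D p :: real
  assumes p: "p > 0" and D: "D > 0" and jD: "D < real j"
    and count: "\<And>e. 0 < e \<Longrightarrow> e \<le> 1 \<Longrightarrow> e < mu j \<Longrightarrow> real j \<le> D * e powr (-p/2)"
  shows "mu j \<le> (D / real j) powr (2/p)"
proof -
  have le1: "mu j \<le> 1"
  proof (rule ccontr)
    assume "\<not> mu j \<le> 1"
    then have "real j \<le> D" using count[of 1] by simp
    then show False using jD by simp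
  qed
  define B where "B = (D / real j) powr (2/p)"
  have Bpos: "B > 0" using D jD by (simp add: B_def)
  have "B < 1 powr (2/p)" unfolding B_def
    by (rule powr_less_mono2) (use p D jD in auto)
  then have Blt: "B < 1" by simp
  show ?thesis unfolding B_def[symmetric]
  proof (rule ccontr)
    assume "\<not> mu j \<le> B"
    (* Apply the counting bound at a level strictly between B and mu j. *)
    define e where "e = (mu j + B) / 2"
    have e: "0 < e" "e \<le> 1" "e < mu j" "B < e" using \<open>\<not> mu j \<le> B\<close> Bpos le1 by (auto simp: e_def)
    have "real j * e powr (p/2) \<le> D"
      using count[OF e(1-3)] e by (simp add: powr_minus_divide field_simps)
    then have "e powr (p/2) \<le> D / real j" using jD D by (simp add: field_simps)
    then have "(e powr (p/2)) powr (2/p) \<le> B" unfolding B_def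
      using p by (intro powr_mono2) auto
    then have "e \<le> B" using p e by (simp add: powr_powr)
    then show False using e by simp
  qed
qed

lemma summable_zeta_terms:
  assumes "s > 1"
  shows "summable (\<lambda>n. 1 / real (Suc n) powr s)"
proof -
  have "summable (\<lambda>n. real n powr (-s))" using assms summable_real_powr_iff by simp
  then have "summable (\<lambda>n. real (Suc n) powr (-s))" by (subst summable_Suc_iff)
  then show ?thesis by (simp add: powr_minus_divide)
qed

text \<open>A nonnegative sequence bounded by mu 1 and decaying like (D/j)^a beyond D has a
  summable tau-th power when a tau > 1: the at most D leading terms contribute at most
  D mu_1^tau and the tail at most D^(a tau) zeta(a tau).\<close>

lemma sum_bound_from_decay:
  fixes mu :: "nat \<Rightarrow> real" and D a \<tau> :: real
  assumes nonneg: "\<And>j. j \<ge> 1 \<Longrightarrow> mu j \<ge> 0"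
    and top: "\<And>j. j \<ge> 1 \<Longrightarrow> mu j \<le> mu 1"
    and tau: "\<tau> > 0" and s: "a * \<tau> > 1" and D: "D \<ge> 0"
    and decay: "\<And>j. D < real j \<Longrightarrow> mu j \<le> (D / real j) powr a"
  shows "summable (\<lambda>n. mu (Suc n) powr \<tau>) \<and>
    (\<Sum>n. mu (Suc n) powr \<tau>) \<le> D * mu 1 powr \<tau> + D powr (a * \<tau>) * zeta_real (a * \<tau>)"
proof -
  define N where "N = nat (floor D)"
  define h where "h n = (if n < N then mu 1 powr \<tau> else 0)
    + D powr (a * \<tau>) * (1 / real (Suc n) powr (a * \<tau>))" for n
  have term_le: "mu (Suc n) powr \<tau> \<le> h n" for n
  proof (cases "n < N")
    case True
    have "mu (Suc n) powr \<tau> \<le> mu 1 powr \<tau>"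
      using top[of "Suc n"] nonneg[of "Suc n"] tau by (intro powr_mono2) auto
    moreover have "0 \<le> D powr (a * \<tau>) * (1 / real (Suc n) powr (a * \<tau>))" by simp
    ultimately show ?thesis using True unfolding h_def by (simp add: add_increasing2)
  next
    case False
    then have "D < real (Suc n)" using D by (simp add: N_def) linarith
    then have "mu (Suc n) powr \<tau> \<le> ((D / real (Suc n)) powr a) powr \<tau>"
      using decay[of "Suc n"] nonneg[of "Suc n"] tau by (intro powr_mono2) auto
    also have "\<dots> = D powr (a * \<tau>) * (1 / real (Suc n) powr (a * \<tau>))"
      by (simp add: powr_powr powr_divide)
    finally show ?thesis using False by (simp add: h_def)
  qed
  have h_sums: "h sums (real N * mu 1 powr \<tau> + D powr (a * \<tau>) * zeta_real (a * \<tau>))"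
  proof -
    have "(\<lambda>n. if n < N then mu 1 powr \<tau> else 0)
        sums (\<Sum>n<N. if n < N then mu 1 powr \<tau> else 0)"
      by (rule sums_finite) auto
    moreover have "(\<lambda>n. D powr (a * \<tau>) * (1 / real (Suc n) powr (a * \<tau>)))
        sums (D powr (a * \<tau>) * zeta_real (a * \<tau>))"
      unfolding zeta_real_def by (intro sums_mult summable_sums summable_zeta_terms s)
    ultimately show ?thesis unfolding h_def by (simp add: sums_add)
  qed
  have summ: "summable (\<lambda>n. mu (Suc n) powr \<tau>)"
    by (rule summable_comparison_test'[OF sums_summable[OF h_sums], of 0]) (use term_le in auto)
  have "(\<Sum>n. mu (Suc n) powr \<tau>) \<le> suminf h"
    by (rule suminf_le[OF term_le summ sums_summable[OF h_sums]])
  also have "\<dots> = real N * mu 1 powr \<tau> + D powr (a * \<tau>) * zeta_real (a * \<tau>)"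
    using h_sums by (simp add: sums_iff)
  also have "\<dots> \<le> D * mu 1 powr \<tau> + D powr (a * \<tau>) * zeta_real (a * \<tau>)"
    using D by (intro add_right_mono mult_right_mono) (auto simp: N_def)
  finally show ?thesis using summ by simp
qed

lemma normalized_sum_bound:
  fixes lam :: "nat \<Rightarrow> real" and \<psi> :: "nat \<Rightarrow> nat \<Rightarrow> nat" and C p q \<tau> :: real
  assumes lam_nonneg: "\<And>m. m \<ge> 1 \<Longrightarrow> lam m \<ge> 0"
    and lam_mono: "\<And>m n. 1 \<le> m \<Longrightarrow> m \<le> n \<Longrightarrow> lam n \<le> lam m"
    and lam_to_0: "(\<lambda>m. lam (Suc m)) \<longlonglongrightarrow> 0"
    and lam1: "lam 1 > 0" and d: "d \<ge> 1"
    and bij: "bij_betw \<psi> {1..} (nabla anti I d)"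
    and ord: "\<And>i j. 1 \<le> i \<Longrightarrow> i \<le> j \<Longrightarrow> lam_dk lam d (\<psi> j) \<le> lam_dk lam d (\<psi> i)"
    and init_pos: "lam_dk lam d (\<psi> 1) > 0"
    and C: "C > 0" and p: "p > 0" and tau: "\<tau> > p / 2"
    and tract: "\<And>\<epsilon>. 0 < \<epsilon> \<Longrightarrow> \<epsilon> \<le> 1 \<Longrightarrow>
                  real (info_compl lam anti I \<epsilon> d) \<le> C * \<epsilon> powr (-p) * real d powr q"
  shows "summable (\<lambda>n. lam_dk lam d (\<psi> (Suc n)) powr \<tau>) \<and>
    (1 / lam_dk lam d (\<psi> 1) powr \<tau>) * (\<Sum>n. lam_dk lam d (\<psi> (Suc n)) powr \<tau>)
      \<le> (1 + C) * real d powr q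
         + C powr (2 * \<tau> / p) * zeta_real (2 * \<tau> / p)
           * (real d powr (2 * q / p) / lam_dk lam d (\<psi> 1)) powr \<tau>"
proof -
  define mu where "mu j = lam_dk lam d (\<psi> j)" for j
  define D where "D = C * real d powr q"
  have D_pos: "D > 0" using C d by (simp add: D_def)
  have tau_pos: "\<tau> > 0" using tau p by (smt (verit) half_gt_zero)
  have mu1: "mu 1 > 0" using init_pos by (simp add: mu_def)
  have count: "real j \<le> D * e powr (-p/2)" if e: "0 < e" "e \<le> 1" "e < mu j" for j e
  proof -
    have "real j \<le> real (info_compl lam anti I (sqrt e) d)"
      using index_le_info_compl[OF lam_nonneg lam_mono lam_to_0 lam1 bij ord] e
      by (simp add: mu_def)
    also have "\<dots> \<le> C * sqrt e powr (-p) * real d powr q" using tract[of "sqrt e"] e by simp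
    also have "sqrt e powr (-p) = e powr (-p/2)"
      using e by (simp add: powr_half_sqrt[symmetric] powr_powr)
    finally show ?thesis by (simp add: D_def mult_ac)
  qed
  have bound: "summable (\<lambda>n. mu (Suc n) powr \<tau>) \<and>
      (\<Sum>n. mu (Suc n) powr \<tau>) \<le> D * mu 1 powr \<tau> + D powr (2/p * \<tau>) * zeta_real (2/p * \<tau>)"
  proof (rule sum_bound_from_decay)
    show "mu j \<ge> 0" if "j \<ge> 1" for j
    proof -
      have "\<psi> j \<in> nabla anti I d" using bij that by (auto simp: bij_betw_def)
      then show ?thesis unfolding mu_def using lam_dk_nonneg[of lam] lam_nonneg by blast
    qed
    show "mu j \<le> mu 1" if "j \<ge> 1" for j using ord[of 1 j] that by (simp add: mu_def)
    show "mu j \<le> (D / real j) powr (2/p)" if "D < real j" for j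
      by (rule decay_from_counting[OF p D_pos that count])
    show "2/p * \<tau> > 1" using tau p by (simp add: field_simps)
  qed (use tau_pos D_pos in auto)
  have rescale: "D powr (2/p * \<tau>) / mu 1 powr \<tau>
      = C powr (2 * \<tau> / p) * (real d powr (2 * q / p) / lam_dk lam d (\<psi> 1)) powr \<tau>"
    using C by (simp add: D_def mu_def powr_mult powr_powr powr_divide mult_ac)
  have "(1 / mu 1 powr \<tau>) * (\<Sum>n. mu (Suc n) powr \<tau>)
      \<le> (1 / mu 1 powr \<tau>) * (D * mu 1 powr \<tau> + D powr (2/p * \<tau>) * zeta_real (2/p * \<tau>))"
    using bound by (intro mult_left_mono) auto
  also have "\<dots> = D + D powr (2/p * \<tau>) / mu 1 powr \<tau> * zeta_real (2 * \<tau> / p)"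
    using mu1 by (simp add: field_simps)
  also have "\<dots> \<le> (1 + C) * real d powr q
      + C powr (2 * \<tau> / p) * zeta_real (2 * \<tau> / p)
        * (real d powr (2 * q / p) / lam_dk lam d (\<psi> 1)) powr \<tau>"
    unfolding rescale by (simp add: D_def distrib_right mult_ac)
  finally show ?thesis using bound by (simp add: mu_def)
qed

lemma bij_betw_Suc_positive: "bij_betw Suc UNIV {1::nat..}"
  by (simp add: image_iff set_eq_iff) (metis Suc_pred' neq0_conv not_less_eq_eq le0 Suc_le_eq)

lemma summable_on_along_enumeration:
  fixes f :: "'a \<Rightarrow> real"
  assumes bij: "bij_betw g {1..} A" and nonneg: "\<And>x. x \<in> A \<Longrightarrow> f x \<ge> 0"
    and summ: "summable (\<lambda>n. f (g (Suc n)))"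
  shows "f summable_on A \<and> infsum f A = (\<Sum>n. f (g (Suc n)))"
proof -
  have bij': "bij_betw (\<lambda>n. g (Suc n)) UNIV A"
    using bij_betw_trans[OF bij_betw_Suc_positive bij] by (simp add: o_def)
  have "((\<lambda>n. f (g (Suc n))) has_sum (\<Sum>n. f (g (Suc n)))) UNIV"
    by (intro sums_nonneg_imp_has_sum summable_sums summ)
       (use nonneg bij' in \<open>auto simp: bij_betw_def\<close>)
  then show ?thesis
    using summable_on_reindex_bij_betw[OF bij', of f] infsum_reindex_bij_betw[OF bij', of f]
    by (auto simp: summable_on_def infsumI)
qed

lemma nabla_dim_one_bij:
  fixes I :: "nat \<Rightarrow> nat set"
  assumes "I 1 = {1}"
  shows "bij_betw (\<lambda>k. k 1) (nabla anti I 1) {1::nat..}"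
proof (rule bij_betw_byWitness[where f' = "\<lambda>m i. if i = 1 then m else undefined"])
  have I1: "I (Suc 0) = {Suc 0}" using assms by simp
  show "\<forall>k\<in>nabla anti I 1. (\<lambda>i. if i = 1 then k 1 else undefined) = k"
    by (auto simp: nabla_def PiE_def extensional_def fun_eq_iff)
  show "(\<lambda>m i. if i = 1 then m else undefined) ` {1..} \<subseteq> nabla anti I 1"
    by (auto simp: nabla_def PiE_def Pi_def I1 extensional_def)
qed (auto simp: nabla_def PiE_def Pi_def)

lemma summable_from_dim_one:
  fixes lam :: "nat \<Rightarrow> real" and I :: "nat \<Rightarrow> nat set"
  assumes I1: "I 1 = {1}"
    and summ: "(\<lambda>k. lam_dk lam 1 k powr \<tau>) summable_on nabla anti I 1"
  shows "summable (\<lambda>m. lam (Suc m) powr \<tau>)"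
proof -
  have "(\<lambda>k. lam (k 1) powr \<tau>) summable_on nabla anti I 1"
    using summ by (simp add: lam_dk_def)
  then have "(\<lambda>m. lam m powr \<tau>) summable_on {1..}"
    using summable_on_reindex_bij_betw[OF nabla_dim_one_bij[of I, OF I1], of "\<lambda>m. lam m powr \<tau>"]
    by simp
  then have "(\<lambda>n. lam (Suc n) powr \<tau>) summable_on UNIV"
    using summable_on_reindex_bij_betw[OF bij_betw_Suc_positive, of "\<lambda>m. lam m powr \<tau>"] by simp
  then show ?thesis by (rule summable_on_imp_summable)
qed

theorem lemma3:
  fixes lam :: "nat \<Rightarrow> real" and anti :: bool and I :: "nat \<Rightarrow> nat set"
    and psi :: "nat \<Rightarrow> nat \<Rightarrow> (nat \<Rightarrow> nat)"
    and C p q :: real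
  assumes lam_nonneg: "\<And>m. m \<ge> 1 \<Longrightarrow> lam m \<ge> 0"
    and lam_mono: "\<And>m n. 1 \<le> m \<Longrightarrow> m \<le> n \<Longrightarrow> lam n \<le> lam m"
    and lam_to_0: "(\<lambda>m. lam (Suc m)) \<longlonglongrightarrow> 0"
    and lam2: "lam 2 > 0"
    and I_sub: "\<And>d. d \<ge> 1 \<Longrightarrow> I d \<subseteq> {1..d}"
    and I_ne: "\<And>d. d \<ge> 1 \<Longrightarrow> I d \<noteq> {}"
    and I1: "I 1 = {1}"
    and psi_bij: "\<And>d. d \<ge> 1 \<Longrightarrow> bij_betw (psi d) {1..} (nabla anti I d)"
    and psi_ord: "\<And>d i j. d \<ge> 1 \<Longrightarrow> 1 \<le> i \<Longrightarrow> i \<le> j \<Longrightarrow>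
                    lam_dk lam d (psi d j) \<le> lam_dk lam d (psi d i)"
    and init_pos: "\<And>d. d \<ge> 1 \<Longrightarrow> lam_dk lam d (psi d 1) > 0"
    and C_pos: "C > 0" and p_pos: "p > 0" and q_nonneg: "q \<ge> 0"
    and poly_tract: "\<And>d \<epsilon>. d \<ge> 1 \<Longrightarrow> 0 < \<epsilon> \<Longrightarrow> \<epsilon> \<le> 1 \<Longrightarrow>
                    real (info_compl lam anti I \<epsilon> d) \<le> C * \<epsilon> powr (-p) * real d powr q"
  shows "\<forall>\<tau>. \<tau> > p / 2 \<longrightarrow>
           summable (\<lambda>m. lam (Suc m) powr \<tau>) \<and>
           (\<forall>d\<ge>1. (\<lambda>k. lam_dk lam d k powr \<tau>) summable_on nabla anti I d \<and>
              (1 / lam_dk lam d (psi d 1) powr \<tau>) * (\<Sum>\<^sub>\<infinity>k\<in>nabla anti I d. lam_dk lam d k powr \<tau>)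
              \<le> (1 + C) * real d powr q
                 + C powr (2 * \<tau> / p) * zeta_real (2 * \<tau> / p)
                   * (real d powr (2 * q / p) / lam_dk lam d (psi d 1)) powr \<tau>)"
proof (intro allI impI)
  fix \<tau> :: real assume tau: "\<tau> > p / 2"
  have lam1: "lam 1 > 0" using lam2 lam_mono[of 1 2] by simp
  have along_ordering: "summable (\<lambda>n. lam_dk lam d (psi d (Suc n)) powr \<tau>) \<and>
      (1 / lam_dk lam d (psi d 1) powr \<tau>) * (\<Sum>n. lam_dk lam d (psi d (Suc n)) powr \<tau>)
        \<le> (1 + C) * real d powr q + C powr (2 * \<tau> / p) * zeta_real (2 * \<tau> / p)
             * (real d powr (2 * q / p) / lam_dk lam d (psi d 1)) powr \<tau>"
    if d: "d \<ge> 1" for d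
    by (rule normalized_sum_bound[OF lam_nonneg lam_mono lam_to_0 lam1 d psi_bij[OF d]
          psi_ord[OF d] init_pos[OF d] C_pos p_pos tau poly_tract[OF d]])
  have unordered: "(\<lambda>k. lam_dk lam d k powr \<tau>) summable_on nabla anti I d \<and>
      (\<Sum>\<^sub>\<infinity>k\<in>nabla anti I d. lam_dk lam d k powr \<tau>) = (\<Sum>n. lam_dk lam d (psi d (Suc n)) powr \<tau>)"
    if d: "d \<ge> 1" for d
    using summable_on_along_enumeration[OF psi_bij[OF d]] along_ordering[OF d] by auto
  have "summable (\<lambda>m. lam (Suc m) powr \<tau>)"
    using summable_from_dim_one[where I = I, OF I1] unordered[of 1] by blast
  then show "summable (\<lambda>m. lam (Suc m) powr \<tau>) \<and>
           (\<forall>d\<ge>1. (\<lambda>k. lam_dk lam d k powr \<tau>) summable_on nabla anti I d \<and>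
              (1 / lam_dk lam d (psi d 1) powr \<tau>) * (\<Sum>\<^sub>\<infinity>k\<in>nabla anti I d. lam_dk lam d k powr \<tau>)
              \<le> (1 + C) * real d powr q
                 + C powr (2 * \<tau> / p) * zeta_real (2 * \<tau> / p)
                   * (real d powr (2 * q / p) / lam_dk lam d (psi d 1)) powr \<tau>)"
    using along_ordering unordered by auto
qed

end
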